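(* Assume $\Phi^{y,\dagger}\in L^1_{\mu_\theta}$ and $\Phi^{y,\mathrm{app}}\in L^1_{\mu_\theta}$. Then $$\max\{d_{\mathrm{KL}}(\mu^{y,\mathrm{app}}_\theta\Vert\mu^{y,\dagger}_\theta),\,d_{\mathrm{KL}}(\mu^{y,\dagger}_\theta\Vert\mu^{y,\mathrm{app}}_\theta)\}\le C\,\Big\|\,|\mathcal{O}\delta^\dagger|^2_{\Sigma_\varepsilon^{-1}}\Big\|_{L^1_{\mu_\theta}}^{1/2},$$ where $C=2^{1/2}\exp\big(2\|\Phi^{y,\dagger}\|_{L^1_{\mu_\theta}}+2\|\Phi^{y,\mathrm{app}}\|_{L^1_{\mu_\theta}}\big)\big(\|\Phi^{y,\dagger}\|^{1/2}_{L^1_{\mu_\theta}}+\|\Phi^{y,\mathrm{app}}\|^{1/2}_{L^1_{\mu_\theta}}\big)$.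
   Context: Let $\Theta$ be a Borel subset of a separable Banach space and $\mu_\theta$ a Borel probability measure on $\Theta$ (the prior). Let $\mathcal{U}$ be a Banach space, $n\in\mathbb{N}$, $\mathcal{O}:\mathcal{U}\to\mathbb{R}^n$ a continuous linear map, and $\mathcal{M}^\dagger,\mathcal{M}:\Theta\to\mathcal{U}$ measurable maps. The model error is $\delta^\dagger:=\mathcal{M}^\dagger-\mathcal{M}$. Let $\Sigma_\varepsilon\in\mathbb{R}^{n\times n}$ be symmetric positive definite and $y\in\mathbb{R}^n$ fixed. For symmetric positive semidefinite $L$, $|a|_L:=(a^\top La)^{1/2}$. Misfits: $\Phi^{y,\dagger}(\theta')=\tfrac12|y-\mathcal{O}\mathcal{M}^\dagger(\theta')|^2_{\Sigma_\varepsilon^{-1}}$, $\Phi^{y,\mathrm{app}}(\theta')=\tfrac12|y-\mathcal{O}\mathcal{M}(\theta')|^2_{\Sigma_\varepsilon^{-1}}$. For a probability measure $\mu$ on a measurable space $E$ and measurable $\Phi:E\to[0,\infty)$, $\mu_\Phi$ denotes the probability measure with $\frac{d\mu_\Phi}{d\mu}=\exp(-\Phi)/\int_E\exp(-\Phi)\,d\mu$. Posteriors: $\mu^{y,\dagger}_\theta:=(\mu_\theta)_{\Phi^{y,\dagger}}$, $\mu^{y,\mathrm{app}}_\theta:=(\mu_\theta)_{\Phi^{y,\mathrm{app}}}$. $d_{\mathrm{KL}}(\mu\Vert\nu)=\int\log\frac{d\mu}{d\nu}\,d\mu$ if $\mu\ll\nu$ and $+\infty$ otherwise. *)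

theory Defs
  imports "HOL-Probability.Probability"
begin

definition wnorm :: "real^'n^'n \<Rightarrow> real^'n \<Rightarrow> real" where
  "wnorm L a = sqrt (a \<bullet> (L *v a))"

definition sym_pos_def_mat :: "real^'n^'n \<Rightarrow> bool" where
  "sym_pos_def_mat S \<longleftrightarrow> transpose S = S \<and> (\<forall>x. x \<noteq> 0 \<longrightarrow> x \<bullet> (S *v x) > 0)"

definition reweight :: "'a measure \<Rightarrow> ('a \<Rightarrow> real) \<Rightarrow> 'a measure" where
  "reweight \<mu> \<Phi> = density \<mu> (\<lambda>x. ennreal (exp (- \<Phi> x) / (\<integral>z. exp (- \<Phi> z) \<partial>\<mu>)))"

text \<open>Kullback-Leibler divergence d_KL(mu || nu) with values in [0,+infinity]:
  the integral of log(dmu/dnu) with respect to mu if mu << nu, and +infinity otherwise.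
  (If mu << nu, the negative part of the integrand is always mu-integrable, so
  non-integrability means the integral is +infinity.)\<close>
definition dKL :: "'a measure \<Rightarrow> 'a measure \<Rightarrow> ereal" where
  "dKL \<mu> \<nu> =
    (if absolutely_continuous \<nu> \<mu> \<and> integrable \<mu> (\<lambda>x. ln (enn2real (RN_deriv \<nu> \<mu> x)))
     then ereal (\<integral>x. ln (enn2real (RN_deriv \<nu> \<mu> x)) \<partial>\<mu>)
     else \<infinity>)"

end

theory Submission
  imports Defs
begin

text \<open>
  Write f1 = Phi_dag, f2 = Phi_app and Zi for the integral of exp (- fi) against the prior.
  The Radon-Nikodym derivative of one Gibbs posterior with respect to the other is explicit,
  so d_KL(mu2 || mu1) is the mu2-mean of f1 - f2 plus ln Z1 - ln Z2. Both terms are at most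
  ||f1 - f2||_L1 / Z2, using exp (- f2) <= 1, ln t <= t - 1 and that exp (- t) is 1-Lipschitz
  for t >= 0, while Jensen's inequality gives 1 / Z2 <= exp (int f2). The misfits are halves of
  squared seminorms, so the reverse triangle inequality bounds |f1 - f2| pointwise by
  |O delta| / sqrt 2 * (sqrt f1 + sqrt f2), and Cauchy-Schwarz turns this into the L1 bound.
\<close>

lemma nonneg_quadratic_discriminant:
  fixes a b c :: real
  assumes nonneg: "\<And>t. 0 \<le> a * t\<^sup>2 + c * t + b" and "0 \<le> a"
  shows "c\<^sup>2 \<le> 4 * a * b"
proof (cases "a = 0")
  case True
  have "c = 0"
  proof (rule ccontr)
    assume "c \<noteq> 0"
    with True nonneg[of "- (b + 1) / c"] show False by simp
  qed
  then show ?thesis using True by simp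
next
  case False
  with \<open>0 \<le> a\<close> have "a > 0" by simp
  have "0 \<le> a * (- c / (2 * a))\<^sup>2 + c * (- c / (2 * a)) + b" by (rule nonneg)
  also have "\<dots> = b - c\<^sup>2 / (4 * a)"
    using \<open>a > 0\<close> by (simp add: power2_eq_square field_simps)
  finally show ?thesis using \<open>a > 0\<close> by (simp add: field_simps)
qed

definition quad_form :: "real^'n^'n \<Rightarrow> real^'n \<Rightarrow> real" where
  "quad_form L u = u \<bullet> (L *v u)"

lemma wnorm_power2: "0 \<le> quad_form L u \<Longrightarrow> (wnorm L u)\<^sup>2 = quad_form L u"
  by (simp add: wnorm_def quad_form_def)

lemma quad_form_minus [simp]: "quad_form L (- u) = quad_form L u"
  by (simp add: quad_form_def matrix_vector_mult_scaleR[of L "-1" u, simplified])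

lemma quad_form_minus_commute: "quad_form L (a - b) = quad_form L (b - a)"
  using quad_form_minus[of L "a - b"] by simp

lemma quad_form_scaleR_add:
  "quad_form L (t *\<^sub>R u + v)
     = quad_form L u * t\<^sup>2 + (u \<bullet> (L *v v) + v \<bullet> (L *v u)) * t + quad_form L v"
  by (simp add: quad_form_def matrix_vector_right_distrib matrix_vector_mult_scaleR
      inner_add_left inner_add_right power2_eq_square algebra_simps)

lemma quad_form_continuous: "continuous_on UNIV (quad_form L)"
  unfolding quad_form_def
  by (intro continuous_on_inner continuous_on_id linear_continuous_on matrix_vector_mul_bounded_linear)

context
  fixes L :: "real^'n^'n"
  assumes psd: "\<And>x. 0 \<le> quad_form L x"
begin

lemma psd_cross_term_le:
  "u \<bullet> (L *v v) + v \<bullet> (L *v u) \<le> 2 * sqrt (quad_form L u) * sqrt (quad_form L v)"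
proof -
  let ?c = "u \<bullet> (L *v v) + v \<bullet> (L *v u)"
  have "?c\<^sup>2 \<le> 4 * quad_form L u * quad_form L v"
    using psd[of "_ *\<^sub>R u + v"] psd[of u]
    by (intro nonneg_quadratic_discriminant) (simp_all only: quad_form_scaleR_add)
  then have "\<bar>?c\<bar> \<le> sqrt (4 * quad_form L u * quad_form L v)"
    by (metis real_sqrt_abs real_sqrt_le_mono)
  then show ?thesis by (simp add: real_sqrt_mult)
qed

lemma sqrt_quad_form_triangle:
  "sqrt (quad_form L (u + v)) \<le> sqrt (quad_form L u) + sqrt (quad_form L v)"
proof (rule real_le_lsqrt)
  show "quad_form L (u + v) \<le> (sqrt (quad_form L u) + sqrt (quad_form L v))\<^sup>2"
    using quad_form_scaleR_add[of L 1 u v] psd_cross_term_le[of u v] psd[of u] psd[of v]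
    by (simp add: power2_eq_square algebra_simps)
qed (use psd in auto)

lemma abs_quad_form_diff_le:
  "\<bar>quad_form L a - quad_form L b\<bar>
     \<le> sqrt (quad_form L (a - b)) * (sqrt (quad_form L a) + sqrt (quad_form L b))"
proof -
  have "\<bar>sqrt (quad_form L a) - sqrt (quad_form L b)\<bar> \<le> sqrt (quad_form L (a - b))"
    using sqrt_quad_form_triangle[of b "a - b"] sqrt_quad_form_triangle[of a "b - a"]
      quad_form_minus[of L "a - b"] by simp
  then have "\<bar>sqrt (quad_form L a) - sqrt (quad_form L b)\<bar> * (sqrt (quad_form L a) + sqrt (quad_form L b))
      \<le> sqrt (quad_form L (a - b)) * (sqrt (quad_form L a) + sqrt (quad_form L b))"
    by (rule mult_right_mono) (use psd in simp)
  moreover have "quad_form L a - quad_form L b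
      = (sqrt (quad_form L a) - sqrt (quad_form L b)) * (sqrt (quad_form L a) + sqrt (quad_form L b))"
    using psd[of a] psd[of b] by (simp add: algebra_simps)
  ultimately show ?thesis by (simp add: abs_mult psd)
qed

lemma quad_form_diff_le: "quad_form L (a - b) \<le> 2 * (quad_form L a + quad_form L b)"
proof -
  have "quad_form L (a - b) = (sqrt (quad_form L (a - b)))\<^sup>2" by (simp add: psd)
  also have "\<dots> \<le> (sqrt (quad_form L a) + sqrt (quad_form L b))\<^sup>2"
    using sqrt_quad_form_triangle[of a "- b"] by (intro power_mono) (simp_all add: psd)
  also have "\<dots> \<le> 2 * (quad_form L a + quad_form L b)"
    using psd[of a] psd[of b] sum_squares_bound[of "sqrt (quad_form L a)" "sqrt (quad_form L b)"]
    by (simp add: power2_eq_square algebra_simps)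
  finally show ?thesis .
qed

lemma abs_half_quad_form_diff_le:
  "\<bar>quad_form L a / 2 - quad_form L b / 2\<bar>
     \<le> sqrt (quad_form L (a - b) / 2) * (sqrt (quad_form L a / 2) + sqrt (quad_form L b / 2))"
proof -
  have "\<bar>quad_form L a / 2 - quad_form L b / 2\<bar> = \<bar>quad_form L a - quad_form L b\<bar> / 2"
    by (simp only: diff_divide_distrib[symmetric] abs_divide abs_numeral)
  also have "\<dots> \<le> sqrt (quad_form L (a - b)) * (sqrt (quad_form L a) + sqrt (quad_form L b)) / 2"
    using abs_quad_form_diff_le[of a b] by simp
  also have "\<dots> = sqrt (quad_form L (a - b) / 2) * (sqrt (quad_form L a / 2) + sqrt (quad_form L b / 2))"
    by (simp add: real_sqrt_divide field_simps)
  finally show ?thesis .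
qed

end

lemma sym_pos_def_mat_invertible:
  assumes "sym_pos_def_mat \<Sigma>"
  shows "invertible \<Sigma>"
proof -
  have "\<forall>z. \<Sigma> *v z = 0 \<longrightarrow> z = 0" using assms by (fastforce simp: sym_pos_def_mat_def)
  then show ?thesis by (simp add: matrix_left_invertible_ker invertible_left_inverse)
qed

lemma quad_form_matrix_inv_nonneg:
  assumes "sym_pos_def_mat \<Sigma>"
  shows "0 \<le> quad_form (matrix_inv \<Sigma>) x"
proof -
  define z where "z = matrix_inv \<Sigma> *v x"
  have "\<Sigma> ** matrix_inv \<Sigma> = mat 1"
    using sym_pos_def_mat_invertible[OF assms]
    unfolding invertible_def matrix_inv_def by (rule someI2_ex) auto
  then have "quad_form (matrix_inv \<Sigma>) x = z \<bullet> (\<Sigma> *v z)"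
    by (simp add: quad_form_def z_def inner_commute matrix_vector_mul_assoc)
  also have "\<dots> \<ge> 0" using assms by (cases "z = 0") (auto simp: sym_pos_def_mat_def)
  finally show ?thesis .
qed

lemma integrable_quad_form_diff:
  fixes a b :: "'a \<Rightarrow> real^'n"
  assumes psd: "\<And>x. 0 \<le> quad_form L x"
    and [measurable]: "a \<in> borel_measurable M" "b \<in> borel_measurable M"
    and int: "integrable M (\<lambda>t. quad_form L (a t))" "integrable M (\<lambda>t. quad_form L (b t))"
  shows "integrable M (\<lambda>t. quad_form L (a t - b t))"
proof (rule Bochner_Integration.integrable_bound)
  show "integrable M (\<lambda>t. 2 * (quad_form L (a t) + quad_form L (b t)))" using int by simp
  show "(\<lambda>t. quad_form L (a t - b t)) \<in> borel_measurable M"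
    by (intro measurable_compose[OF _ borel_measurable_continuous_onI[OF quad_form_continuous]]) measurable
  have "norm (quad_form L (a t - b t)) \<le> norm (2 * (quad_form L (a t) + quad_form L (b t)))" for t
    using quad_form_diff_le[OF psd, of "a t" "b t"] psd[of "a t"] psd[of "b t"] psd[of "a t - b t"]
    by simp
  then show "AE t in M. norm (quad_form L (a t - b t)) \<le> norm (2 * (quad_form L (a t) + quad_form L (b t)))"
    by simp
qed

lemma integral_sqrt_mult_le:
  fixes f g :: "'a \<Rightarrow> real"
  assumes f: "integrable M f" "\<And>x. 0 \<le> f x" and g: "integrable M g" "\<And>x. 0 \<le> g x"
  shows "integrable M (\<lambda>x. sqrt (f x) * sqrt (g x))"
    and "(\<integral>x. sqrt (f x) * sqrt (g x) \<partial>M) \<le> sqrt (\<integral>x. f x \<partial>M) * sqrt (\<integral>x. g x \<partial>M)"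
proof -
  have [measurable]: "f \<in> borel_measurable M" "g \<in> borel_measurable M" using f g by auto
  show int: "integrable M (\<lambda>x. sqrt (f x) * sqrt (g x))"
  proof (rule Bochner_Integration.integrable_bound[OF Bochner_Integration.integrable_add[OF f(1) g(1)]])
    have "norm (sqrt (f x) * sqrt (g x)) \<le> norm (f x + g x)" for x
      using f(2)[of x] g(2)[of x] arith_geo_mean_sqrt[of "f x" "g x"] by (simp add: real_sqrt_mult)
    then show "AE x in M. norm (sqrt (f x) * sqrt (g x)) \<le> norm (f x + g x)" by simp
  qed simp
  have nn: "(\<integral>\<^sup>+x. ennreal (h x) \<partial>M) = ennreal (\<integral>x. h x \<partial>M)"
    if "integrable M h" "\<And>x. 0 \<le> h x" for h :: "'a \<Rightarrow> real"
    using that by (intro nn_integral_eq_integral) auto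
  have "ennreal ((\<integral>x. sqrt (f x) * sqrt (g x) \<partial>M)\<^sup>2)
      = (\<integral>\<^sup>+x. ennreal (sqrt (f x) * sqrt (g x)) \<partial>M)\<^sup>2"
    using int f(2) g(2) by (simp add: nn ennreal_power)
  also have "\<dots> = (\<integral>\<^sup>+x. ennreal (sqrt (f x)) * ennreal (sqrt (g x)) \<partial>M)\<^sup>2"
    using f(2) by (simp add: ennreal_mult')
  also have "\<dots> \<le> (\<integral>\<^sup>+x. ennreal (sqrt (f x)) ^ 2 \<partial>M) * (\<integral>\<^sup>+x. ennreal (sqrt (g x)) ^ 2 \<partial>M)"
    by (rule Cauchy_Schwarz_nn_integral) measurable
  also have "\<dots> = ennreal (\<integral>x. f x \<partial>M) * ennreal (\<integral>x. g x \<partial>M)"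
    using f(2) g(2) by (simp add: ennreal_power nn[OF f] nn[OF g])
  also have "\<dots> = ennreal ((\<integral>x. f x \<partial>M) * (\<integral>x. g x \<partial>M))"
    using f g by (simp add: ennreal_mult)
  finally have "(\<integral>x. sqrt (f x) * sqrt (g x) \<partial>M)\<^sup>2 \<le> (\<integral>x. f x \<partial>M) * (\<integral>x. g x \<partial>M)"
    using f g by (simp add: ennreal_le_iff)
  then show "(\<integral>x. sqrt (f x) * sqrt (g x) \<partial>M) \<le> sqrt (\<integral>x. f x \<partial>M) * sqrt (\<integral>x. g x \<partial>M)"
    by (metis real_le_rsqrt real_sqrt_mult)
qed

lemma integrable_exp_neg_mult:
  fixes f g :: "'a \<Rightarrow> real"
  assumes [measurable]: "f \<in> borel_measurable M" and "\<And>x. 0 \<le> f x" and "integrable M g"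
  shows "integrable M (\<lambda>x. exp (- f x) * g x)"
proof (rule Bochner_Integration.integrable_bound[OF \<open>integrable M g\<close>])
  have "norm (exp (- f x) * g x) \<le> norm (g x)" for x
    using assms(2)[of x] by (simp add: abs_mult mult_left_le_one_le)
  then show "AE x in M. norm (exp (- f x) * g x) \<le> norm (g x)" by simp
qed (use assms in simp)

lemma exp_neg_diff_le:
  fixes a b :: real
  assumes "0 \<le> a"
  shows "exp (- a) - exp (- b) \<le> \<bar>a - b\<bar>"
proof (cases "a \<le> b")
  case True
  have "exp (- a) - exp (- b) = exp (- a) * (1 - exp (a - b))" by (simp add: algebra_simps flip: exp_add)
  also have "\<dots> \<le> 1 * (b - a)"
    using exp_ge_add_one_self[of "a - b"] assms True by (intro mult_mono) (auto simp: algebra_simps)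
  finally show ?thesis using True by simp
next
  case False
  then have "exp (- a) \<le> exp (- b)" by simp
  with False show ?thesis by linarith
qed

context prob_space
begin

lemma integrable_exp_neg:
  fixes f :: "'a \<Rightarrow> real"
  assumes [measurable]: "f \<in> borel_measurable M" and "\<And>x. 0 \<le> f x"
  shows "integrable M (\<lambda>x. exp (- f x))"
proof (rule integrable_const_bound[where B = 1])
  have "norm (exp (- f x)) \<le> 1" for x using assms(2)[of x] by simp
  then show "AE x in M. norm (exp (- f x)) \<le> 1" by simp
qed measurable

lemma exp_neg_integral_le:
  fixes f :: "'a \<Rightarrow> real"
  assumes f: "integrable M f" "\<And>x. 0 \<le> f x"
  shows "exp (- (\<integral>x. f x \<partial>M)) \<le> (\<integral>x. exp (- f x) \<partial>M)"
proof -
  define m where "m = (\<integral>x. f x \<partial>M)"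
  have "exp (- m) = (\<integral>x. exp (- m) * (1 + (m - f x)) \<partial>M)"
    using f by (simp add: m_def prob_space algebra_simps)
  also have "\<dots> \<le> (\<integral>x. exp (- m) * exp (m - f x) \<partial>M)"
  proof (intro integral_mono)
    show "integrable M (\<lambda>x. exp (- m) * exp (m - f x))"
      using integrable_exp_neg[of f] f by (simp flip: exp_add)
    show "exp (- m) * (1 + (m - f x)) \<le> exp (- m) * exp (m - f x)" for x
      using exp_ge_add_one_self[of "m - f x"] by simp
  qed (use f in simp)
  also have "\<dots> = (\<integral>x. exp (- f x) \<partial>M)" by (simp flip: exp_add)
  finally show ?thesis by (simp add: m_def)
qed

lemma normalizing_constant_pos:
  fixes f :: "'a \<Rightarrow> real"
  assumes "integrable M f" "\<And>x. 0 \<le> f x"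
  shows "0 < (\<integral>x. exp (- f x) \<partial>M)"
  using exp_neg_integral_le[OF assms] exp_gt_zero[of "- (\<integral>x. f x \<partial>M)"] by linarith

lemma prob_space_reweight:
  fixes f :: "'a \<Rightarrow> real"
  assumes "integrable M f" "\<And>x. 0 \<le> f x"
  shows "prob_space (reweight M f)"
proof (rule prob_spaceI)
  let ?Z = "\<integral>x. exp (- f x) \<partial>M"
  have "emeasure (reweight M f) (space (reweight M f))
      = (\<integral>\<^sup>+x. ennreal (exp (- f x) / ?Z) * indicator (space M) x \<partial>M)"
    unfolding reweight_def using assms by (simp add: emeasure_density)
  also have "\<dots> = (\<integral>\<^sup>+x. ennreal (exp (- f x) / ?Z) \<partial>M)"
    by (intro nn_integral_cong) simp
  also have "\<dots> = ennreal (\<integral>x. exp (- f x) / ?Z \<partial>M)"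
    using assms normalizing_constant_pos[OF assms] integrable_exp_neg[of f]
    by (intro nn_integral_eq_integral) auto
  also have "\<dots> = 1" using normalizing_constant_pos[OF assms] by simp
  finally show "emeasure (reweight M f) (space (reweight M f)) = 1" .
qed

end

lemma dKL_density_density:
  fixes h1 h2 :: "'a \<Rightarrow> real"
  assumes [measurable]: "h1 \<in> borel_measurable M" "h2 \<in> borel_measurable M"
    and pos: "\<And>x. 0 < h1 x" "\<And>x. 0 < h2 x"
    and "sigma_finite_measure (density M h1)"
    and int: "integrable M (\<lambda>x. h2 x * ln (h2 x / h1 x))"
  shows "dKL (density M h2) (density M h1) = ereal (\<integral>x. h2 x * ln (h2 x / h1 x) \<partial>M)"
proof -
  interpret N1: sigma_finite_measure "density M h1" by fact
  define r where "r x = h2 x / h1 x" for x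
  have r_pos: "0 < r x" for x using pos by (simp add: r_def)
  have [measurable]: "r \<in> borel_measurable M" unfolding r_def by measurable
  have "density (density M h1) r = density M (\<lambda>x. ennreal (h1 x) * ennreal (r x))"
    by (rule density_density_eq) simp_all
  also have "(\<lambda>x. ennreal (h1 x) * ennreal (r x)) = h2"
  proof
    fix x
    show "ennreal (h1 x) * ennreal (r x) = ennreal (h2 x)"
      using pos(1)[of x] r_pos[of x] by (simp add: r_def less_imp_le flip: ennreal_mult)
  qed
  finally have dens: "density (density M h1) r = density M h2" .
  have ac: "absolutely_continuous (density M h1) (density M h2)"
    unfolding dens[symmetric] by (rule absolutely_continuousI_density) simp
  have "AE x in density M h1. ennreal (r x) = RN_deriv (density M h1) (density M h2) x"
    by (rule N1.RN_deriv_unique[OF _ dens]) simp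
  then have "AE x in density M h2. ennreal (r x) = RN_deriv (density M h1) (density M h2) x"
    by (rule absolutely_continuous_AE[OF _ ac, rotated]) simp
  then have ln_RN: "AE x in density M h2.
      ln (enn2real (RN_deriv (density M h1) (density M h2) x)) = ln (r x)"
    by eventually_elim (metis enn2real_ennreal r_pos less_imp_le)
  have RN_meas: "(\<lambda>x. ln (enn2real (RN_deriv (density M h1) (density M h2) x)))
      \<in> borel_measurable (density M h2)"
    by (simp add: measurable_cong_sets[of "density M h2" "density M h1"])
  have ln_r_meas: "(\<lambda>x. ln (r x)) \<in> borel_measurable (density M h2)" by simp
  have int_ln_r: "integrable (density M h2) (\<lambda>x. ln (r x))"
    using int pos by (simp add: r_def integrable_density less_imp_le)
  have "dKL (density M h2) (density M h1) = ereal (\<integral>x. ln (r x) \<partial>density M h2)"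
    using ac int_ln_r integrable_cong_AE_imp[OF int_ln_r RN_meas]
      integral_cong_AE[OF RN_meas ln_r_meas ln_RN] ln_RN
    by (simp add: dKL_def eq_commute)
  also have "(\<integral>x. ln (r x) \<partial>density M h2) = (\<integral>x. h2 x * ln (h2 x / h1 x) \<partial>M)"
    using pos by (simp add: r_def integral_density less_imp_le)
  finally show ?thesis .
qed

context prob_space
begin

lemma dKL_reweight:
  fixes f1 f2 :: "'a \<Rightarrow> real"
  assumes f1: "integrable M f1" "\<And>x. 0 \<le> f1 x" and f2: "integrable M f2" "\<And>x. 0 \<le> f2 x"
  defines "Z1 \<equiv> \<integral>x. exp (- f1 x) \<partial>M" and "Z2 \<equiv> \<integral>x. exp (- f2 x) \<partial>M"
  shows "dKL (reweight M f2) (reweight M f1)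
    = ereal (\<integral>x. exp (- f2 x) / Z2 * (f1 x - f2 x + ln Z1 - ln Z2) \<partial>M)"
proof -
  have [measurable]: "f1 \<in> borel_measurable M" "f2 \<in> borel_measurable M" using f1 f2 by auto
  have Z1: "0 < Z1" and Z2: "0 < Z2"
    unfolding Z1_def Z2_def using normalizing_constant_pos f1 f2 by auto
  define h1 where "h1 x = exp (- f1 x) / Z1" for x
  define h2 where "h2 x = exp (- f2 x) / Z2" for x
  have \<nu>1: "reweight M f1 = density M h1" and \<nu>2: "reweight M f2 = density M h2"
    by (simp_all add: reweight_def h1_def h2_def Z1_def Z2_def)
  have ln_ratio: "ln (h2 x / h1 x) = f1 x - f2 x + ln Z1 - ln Z2" for x
    using Z1 Z2 by (simp add: h1_def h2_def ln_div ln_mult)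
  have "integrable M (\<lambda>x. h2 x * ln (h2 x / h1 x))"
    using integrable_exp_neg_mult[of f2 M "\<lambda>x. (f1 x - f2 x + ln Z1 - ln Z2) / Z2"] f1 f2
    unfolding ln_ratio by (simp add: h2_def)
  then have "dKL (density M h2) (density M h1) = ereal (\<integral>x. h2 x * ln (h2 x / h1 x) \<partial>M)"
    using Z1 Z2 prob_space_reweight[OF f1] unfolding \<nu>1
    by (intro dKL_density_density) (auto simp: h1_def h2_def prob_space_imp_sigma_finite)
  then show ?thesis unfolding \<nu>1 \<nu>2 ln_ratio by (simp add: h2_def)
qed

end

context prob_space
begin

lemma ln_normalizing_constant_diff_le:
  fixes f1 f2 :: "'a \<Rightarrow> real"
  assumes f1: "integrable M f1" "\<And>x. 0 \<le> f1 x" and f2: "integrable M f2" "\<And>x. 0 \<le> f2 x"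
  defines "Z1 \<equiv> \<integral>x. exp (- f1 x) \<partial>M" and "Z2 \<equiv> \<integral>x. exp (- f2 x) \<partial>M"
  shows "ln Z1 - ln Z2 \<le> (\<integral>x. \<bar>f1 x - f2 x\<bar> \<partial>M) / Z2"
proof -
  have [measurable]: "f1 \<in> borel_measurable M" "f2 \<in> borel_measurable M" using f1 f2 by auto
  have Z2: "0 < Z2" unfolding Z2_def using normalizing_constant_pos f2 by auto
  have int_exp: "integrable M (\<lambda>x. exp (- f1 x))" "integrable M (\<lambda>x. exp (- f2 x))"
    using integrable_exp_neg f1 f2 by auto
  have "ln Z1 - ln Z2 \<le> Z1 / Z2 - 1"
    using Z2 normalizing_constant_pos[OF f1] ln_le_minus_one[of "Z1 / Z2"]
    by (simp add: Z1_def ln_div)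
  also have "\<dots> = (\<integral>x. exp (- f1 x) - exp (- f2 x) \<partial>M) / Z2"
    using Z2 int_exp by (simp add: Z1_def Z2_def field_simps)
  also have "\<dots> \<le> (\<integral>x. \<bar>f1 x - f2 x\<bar> \<partial>M) / Z2"
    using Z2 int_exp f1 f2 exp_neg_diff_le[OF f1(2)]
    by (intro divide_right_mono integral_mono) auto
  finally show ?thesis .
qed

lemma dKL_reweight_le:
  fixes f1 f2 :: "'a \<Rightarrow> real"
  assumes f1: "integrable M f1" "\<And>x. 0 \<le> f1 x" and f2: "integrable M f2" "\<And>x. 0 \<le> f2 x"
  shows "dKL (reweight M f2) (reweight M f1)
    \<le> ereal (2 * exp (\<integral>x. f2 x \<partial>M) * (\<integral>x. \<bar>f1 x - f2 x\<bar> \<partial>M))"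
proof -
  have [measurable]: "f1 \<in> borel_measurable M" "f2 \<in> borel_measurable M" using f1 f2 by auto
  define Z1 where "Z1 = (\<integral>x. exp (- f1 x) \<partial>M)"
  define Z2 where "Z2 = (\<integral>x. exp (- f2 x) \<partial>M)"
  define E where "E = (\<integral>x. \<bar>f1 x - f2 x\<bar> \<partial>M)"
  have Z2: "0 < Z2" unfolding Z2_def using normalizing_constant_pos f2 by auto
  have "(\<lambda>x. exp (- f2 x) / Z2 * (f1 x - f2 x + ln Z1 - ln Z2))
      = (\<lambda>x. exp (- f2 x) * (f1 x - f2 x) / Z2 + (ln Z1 - ln Z2) / Z2 * exp (- f2 x))"
    using Z2 by (simp add: fun_eq_iff field_simps)
  then have "(\<integral>x. exp (- f2 x) / Z2 * (f1 x - f2 x + ln Z1 - ln Z2) \<partial>M)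
      = (\<integral>x. exp (- f2 x) * (f1 x - f2 x) \<partial>M) / Z2 + (ln Z1 - ln Z2)"
    using integrable_exp_neg_mult[of f2 M "\<lambda>x. f1 x - f2 x"] integrable_exp_neg[of f2] f1 f2 Z2
    by (simp add: Z2_def)
  also have "\<dots> \<le> E / Z2 + E / Z2"
  proof (intro add_mono divide_right_mono)
    show "(\<integral>x. exp (- f2 x) * (f1 x - f2 x) \<partial>M) \<le> E"
      unfolding E_def
      using integrable_exp_neg_mult[of f2 M "\<lambda>x. f1 x - f2 x"] f1 f2
    proof (intro integral_mono)
      fix x
      have "exp (- f2 x) * (f1 x - f2 x) \<le> exp (- f2 x) * \<bar>f1 x - f2 x\<bar>" by simp
      also have "\<dots> \<le> \<bar>f1 x - f2 x\<bar>" using f2(2)[of x] by (intro mult_left_le_one_le) auto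
      finally show "exp (- f2 x) * (f1 x - f2 x) \<le> \<bar>f1 x - f2 x\<bar>" .
    qed auto
    show "ln Z1 - ln Z2 \<le> E / Z2"
      unfolding Z1_def Z2_def E_def by (rule ln_normalizing_constant_diff_le[OF f1 f2])
  qed (use Z2 in simp)
  also have "\<dots> \<le> 2 * E * exp (\<integral>x. f2 x \<partial>M)"
  proof -
    have "1 / Z2 \<le> 1 / exp (- (\<integral>x. f2 x \<partial>M))"
      using exp_neg_integral_le[OF f2] Z2 by (intro divide_left_mono) (auto simp: Z2_def)
    moreover have "0 \<le> E" unfolding E_def by simp
    ultimately show ?thesis by (simp add: exp_minus divide_inverse mult_left_mono)
  qed
  finally show ?thesis
    using dKL_reweight[OF f1 f2] by (simp add: Z1_def Z2_def E_def mult_ac)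
qed

end

lemma integral_abs_diff_le:
  fixes f1 f2 g :: "'a \<Rightarrow> real"
  assumes f1: "integrable M f1" "\<And>x. 0 \<le> f1 x" and f2: "integrable M f2" "\<And>x. 0 \<le> f2 x"
    and g: "integrable M g" "\<And>x. 0 \<le> g x"
    and diff_le: "\<And>x. \<bar>f1 x - f2 x\<bar> \<le> sqrt (g x / 2) * (sqrt (f1 x) + sqrt (f2 x))"
  shows "(\<integral>x. \<bar>f1 x - f2 x\<bar> \<partial>M)
    \<le> sqrt ((\<integral>x. g x \<partial>M) / 2) * (sqrt (\<integral>x. f1 x \<partial>M) + sqrt (\<integral>x. f2 x \<partial>M))"
proof -
  note cs1 = integral_sqrt_mult_le[OF g f1] and cs2 = integral_sqrt_mult_le[OF g f2]
  have "(\<integral>x. \<bar>f1 x - f2 x\<bar> \<partial>M)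
      \<le> (\<integral>x. (sqrt (g x) * sqrt (f1 x) + sqrt (g x) * sqrt (f2 x)) / sqrt 2 \<partial>M)"
  proof (rule integral_mono)
    show "\<bar>f1 x - f2 x\<bar> \<le> (sqrt (g x) * sqrt (f1 x) + sqrt (g x) * sqrt (f2 x)) / sqrt 2" for x
      using diff_le[of x] by (simp add: real_sqrt_divide algebra_simps)
  qed (use f1 f2 cs1(1) cs2(1) in simp_all)
  also have "\<dots> = ((\<integral>x. sqrt (g x) * sqrt (f1 x) \<partial>M) + (\<integral>x. sqrt (g x) * sqrt (f2 x) \<partial>M)) / sqrt 2"
    using cs1(1) cs2(1) by simp
  also have "\<dots> \<le> (sqrt (\<integral>x. g x \<partial>M) * sqrt (\<integral>x. f1 x \<partial>M)
      + sqrt (\<integral>x. g x \<partial>M) * sqrt (\<integral>x. f2 x \<partial>M)) / sqrt 2"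
    using cs1(2) cs2(2) by (intro divide_right_mono add_mono) auto
  finally show ?thesis by (simp add: real_sqrt_divide algebra_simps)
qed

lemma (in prob_space) max_dKL_reweight_le:
  fixes f1 f2 g :: "'a \<Rightarrow> real"
  assumes f1: "integrable M f1" "\<And>x. 0 \<le> f1 x" and f2: "integrable M f2" "\<And>x. 0 \<le> f2 x"
    and g: "integrable M g" "\<And>x. 0 \<le> g x"
    and diff_le: "\<And>x. \<bar>f1 x - f2 x\<bar> \<le> sqrt (g x / 2) * (sqrt (f1 x) + sqrt (f2 x))"
  defines "A \<equiv> \<integral>x. f1 x \<partial>M" and "B \<equiv> \<integral>x. f2 x \<partial>M" and "D \<equiv> \<integral>x. g x \<partial>M"
  shows "max (dKL (reweight M f2) (reweight M f1)) (dKL (reweight M f1) (reweight M f2))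
    \<le> ereal (sqrt 2 * exp (2 * A + 2 * B) * (sqrt A + sqrt B) * sqrt D)"
proof -
  define E where "E = (\<integral>x. \<bar>f1 x - f2 x\<bar> \<partial>M)"
  have nonneg: "0 \<le> A" "0 \<le> B" "0 \<le> D" using f1(2) f2(2) g(2) by (simp_all add: A_def B_def D_def)
  have "E \<le> sqrt (D / 2) * (sqrt A + sqrt B)"
    using integral_abs_diff_le[OF f1 f2 g diff_le] by (simp add: A_def B_def D_def E_def)
  also have "sqrt (D / 2) = sqrt 2 * sqrt D / 2"
    by (simp add: real_sqrt_divide real_div_sqrt field_simps)
  finally have E_le: "2 * E \<le> sqrt 2 * (sqrt A + sqrt B) * sqrt D"
    by (simp add: field_simps)
  have bound: "2 * exp C * E \<le> sqrt 2 * exp (2 * A + 2 * B) * (sqrt A + sqrt B) * sqrt D"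
    if "C \<le> 2 * A + 2 * B" for C
    using mult_mono[OF exp_le_cancel_iff[THEN iffD2, OF that] E_le] nonneg
    by (simp add: E_def mult_ac)
  have "\<bar>f2 x - f1 x\<bar> = \<bar>f1 x - f2 x\<bar>" for x by (rule abs_minus_commute)
  then show ?thesis
    using dKL_reweight_le[OF f1 f2] dKL_reweight_le[OF f2 f1] bound[of A] bound[of B] nonneg
    unfolding A_def B_def E_def by (auto intro: order_trans)
qed

theorem mainTheorem2:
  fixes \<Theta> :: "'b::{banach, second_countable_topology} set"
    and \<mu> :: "'b measure"
    and Obs :: "'u::banach \<Rightarrow> real^'n"
    and Mdag Mapp :: "'b \<Rightarrow> 'u"
    and \<Sigma> :: "real^'n^'n"
    and y :: "real^'n"
    and \<Phi>dag \<Phi>app :: "'b \<Rightarrow> real"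
  assumes \<Theta>_borel: "\<Theta> \<in> sets borel"
    and prior: "prob_space \<mu>" "sets \<mu> = sets (restrict_space borel \<Theta>)"
    and Obs_lin: "bounded_linear Obs"
    and Mdag_meas: "Mdag \<in> borel_measurable \<mu>"
    and Mapp_meas: "Mapp \<in> borel_measurable \<mu>"
    and \<Sigma>_spd: "sym_pos_def_mat \<Sigma>"
    and \<Phi>dag_def: "\<And>t. \<Phi>dag t = 1/2 * (wnorm (matrix_inv \<Sigma>) (y - Obs (Mdag t)))\<^sup>2"
    and \<Phi>app_def: "\<And>t. \<Phi>app t = 1/2 * (wnorm (matrix_inv \<Sigma>) (y - Obs (Mapp t)))\<^sup>2"
    and int_dag: "integrable \<mu> \<Phi>dag"
    and int_app: "integrable \<mu> \<Phi>app"
  shows "max (dKL (reweight \<mu> \<Phi>app) (reweight \<mu> \<Phi>dag))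
             (dKL (reweight \<mu> \<Phi>dag) (reweight \<mu> \<Phi>app))
         \<le> ereal (sqrt 2
                  * exp (2 * (\<integral>t. norm (\<Phi>dag t) \<partial>\<mu>) + 2 * (\<integral>t. norm (\<Phi>app t) \<partial>\<mu>))
                  * (sqrt (\<integral>t. norm (\<Phi>dag t) \<partial>\<mu>) + sqrt (\<integral>t. norm (\<Phi>app t) \<partial>\<mu>))
                  * sqrt (\<integral>t. norm ((wnorm (matrix_inv \<Sigma>) (Obs (Mdag t - Mapp t)))\<^sup>2) \<partial>\<mu>))"
proof -
  define L where "L = matrix_inv \<Sigma>"
  define a where "a t = y - Obs (Mdag t)" for t
  define b where "b t = y - Obs (Mapp t)" for t
  have psd: "0 \<le> quad_form L u" for u unfolding L_def by (rule quad_form_matrix_inv_nonneg[OF \<Sigma>_spd])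
  have \<Phi>: "\<Phi>dag = (\<lambda>t. quad_form L (a t) / 2)" "\<Phi>app = (\<lambda>t. quad_form L (b t) / 2)"
    using \<Phi>dag_def \<Phi>app_def psd by (simp_all add: fun_eq_iff wnorm_power2 L_def a_def b_def)
  have "Obs (Mdag t - Mapp t) = b t - a t" for t
    by (simp add: a_def b_def linear_diff[OF bounded_linear.linear[OF Obs_lin]])
  then have model_error: "(\<lambda>t. norm ((wnorm (matrix_inv \<Sigma>) (Obs (Mdag t - Mapp t)))\<^sup>2))
      = (\<lambda>t. quad_form L (a t - b t))"
    using psd by (simp add: wnorm_power2 quad_form_minus_commute flip: L_def)
  have "(\<lambda>t. Obs (Mdag t)) \<in> borel_measurable \<mu>" "(\<lambda>t. Obs (Mapp t)) \<in> borel_measurable \<mu>"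
    using Mdag_meas Mapp_meas Obs_lin
    by (auto intro: borel_measurable_continuous_onI linear_continuous_on measurable_compose[of _ _ borel])
  then have "a \<in> borel_measurable \<mu>" "b \<in> borel_measurable \<mu>" unfolding a_def b_def by simp_all
  moreover have "integrable \<mu> (\<lambda>t. quad_form L (a t))" "integrable \<mu> (\<lambda>t. quad_form L (b t))"
    using integrable_mult_left[of 2 \<mu> \<Phi>dag] integrable_mult_left[of 2 \<mu> \<Phi>app] int_dag int_app
    unfolding \<Phi> by simp_all
  ultimately have "integrable \<mu> (\<lambda>t. quad_form L (a t - b t))"
    by (rule integrable_quad_form_diff[OF psd])
  then have "max (dKL (reweight \<mu> \<Phi>app) (reweight \<mu> \<Phi>dag)) (dKL (reweight \<mu> \<Phi>dag) (reweight \<mu> \<Phi>app))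
      \<le> ereal (sqrt 2 * exp (2 * (\<integral>t. \<Phi>dag t \<partial>\<mu>) + 2 * (\<integral>t. \<Phi>app t \<partial>\<mu>))
          * (sqrt (\<integral>t. \<Phi>dag t \<partial>\<mu>) + sqrt (\<integral>t. \<Phi>app t \<partial>\<mu>))
          * sqrt (\<integral>t. quad_form L (a t - b t) \<partial>\<mu>))"
    using psd abs_half_quad_form_diff_le[OF psd] int_dag int_app unfolding \<Phi>
    by (intro prob_space.max_dKL_reweight_le[OF prior(1)]) auto
  moreover have "(\<lambda>t. norm (\<Phi>dag t)) = \<Phi>dag" "(\<lambda>t. norm (\<Phi>app t)) = \<Phi>app"
    using psd by (auto simp: \<Phi>)
  ultimately show ?thesis by (simp only: model_error)
qed

end
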